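(* Let $(A(n))_{n\ge1}$ be an i.i.d. sequence of random topical operators on $\mathbb R^d$ with the memory loss property, and let $\nu_0$ be its invariant probability measure on $\mathbb{PR}^d_{\max}$. Then the support of $\nu_0$ is $$S_{\nu_0}=\overline{\{\overline{\theta\mathbf 1}:\theta\in T_A,\ \theta\text{ of rank }1\}}.$$
   Context: A map $A:\mathbb R^d\to\mathbb R^d$ is topical if it is isotone ($x\le y$ coordinatewise implies $Ax\le Ay$) and additively homogeneous ($A(x+a\mathbf 1)=Ax+a\mathbf 1$, $\mathbf 1=(1,\dots,1)'$). $Top_d$ is the set of topical operators with the topology of uniform convergence on compact sets. $\mathbb{PR}^d_{\max}$ is the quotient of $\mathbb R^d$ by $x\sim y\iff x-y\in\mathbb R\mathbf 1$, $\bar x$ the class of $x$, with metric $\delta(\bar x,\bar y)=\max_i(x_i-y_i)+\max_i(y_i-x_i)$. $A$ has rank 1 if $\overline{Ax}$ does not depend on $x$. The sequence has the memory loss property if some $A(N)\cdots A(1)$ has rank 1 with positive probability. Under this property the Markov chain $\bar x\mapsto\overline{A(n)x}$ on $\mathbb{PR}^d_{\max}$ has a unique invariant probability measure $\nu_0$. $S_A$ is the support of the law of $A(1)$ in $Top_d$ and $T_A$ the semigroup generated by $S_A$ under composition. The overline on the set denotes closure in $\mathbb{PR}^d_{\max}$. *)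

theory Defs
  imports "HOL-Probability.Probability"
begin

definition const_vec :: "real \<Rightarrow> real ^ 'd" where
  "const_vec a = (\<chi> i. a)"

definition topical :: "(real ^ 'd \<Rightarrow> real ^ 'd) \<Rightarrow> bool" where
  "topical f \<longleftrightarrow>
     (\<forall>x y. (\<forall>i. x $ i \<le> y $ i) \<longrightarrow> (\<forall>i. f x $ i \<le> f y $ i)) \<and>
     (\<forall>x a. f (x + const_vec a) = f x + const_vec a)"

definition proj_eq :: "real ^ 'd \<Rightarrow> real ^ 'd \<Rightarrow> bool" where
  "proj_eq x y \<longleftrightarrow> (\<exists>c. x - y = const_vec c)"

lemma proj_eq_equivp: "equivp proj_eq"
proof (rule equivpI)
  show "reflp proj_eq" unfolding reflp_def proj_eq_def const_vec_def
    by (auto intro!: exI[of _ 0] simp: vec_eq_iff)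
  show "symp proj_eq" unfolding symp_def proj_eq_def const_vec_def
    by (auto simp: vec_eq_iff) (metis minus_diff_eq)
  show "transp proj_eq" unfolding transp_def proj_eq_def const_vec_def
    by (auto simp: vec_eq_iff) (metis add.commute diff_add_cancel add_diff_eq)
qed

quotient_type ('d) projmax = "real ^ 'd::finite" / proj_eq
  by (rule proj_eq_equivp)

definition pclass :: "real ^ 'd::finite \<Rightarrow> 'd projmax" where
  "pclass x = abs_projmax x"

definition maxdiff :: "real ^ 'd \<Rightarrow> real ^ 'd \<Rightarrow> real" where
  "maxdiff x y = Max (range (\<lambda>i. x $ i - y $ i))"

definition delta_raw :: "real ^ 'd \<Rightarrow> real ^ 'd \<Rightarrow> real" where
  "delta_raw x y = maxdiff x y + maxdiff y x"

lemma maxdiff_ge: "x $ i - y $ i \<le> maxdiff x y"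
  unfolding maxdiff_def by (rule Max_ge) auto

lemma maxdiff_obtain: "\<exists>i. maxdiff x y = x $ i - y $ i"
proof -
  have "maxdiff x y \<in> range (\<lambda>i. x $ i - y $ i)"
    unfolding maxdiff_def by (rule Max_in) auto
  thus ?thesis by auto
qed

lemma maxdiff_le_iff: "maxdiff x y \<le> c \<longleftrightarrow> (\<forall>i. x $ i - y $ i \<le> c)"
  using maxdiff_ge maxdiff_obtain by (metis order_trans)

lemma maxdiff_shift:
  assumes "x - x' = const_vec a" "y - y' = const_vec b"
  shows "maxdiff x y = maxdiff x' y' + (a - b)"
proof -
  have h: "\<And>i. x $ i - y $ i = (x' $ i - y' $ i) + (a - b)"
    using assms by (auto simp: vec_eq_iff const_vec_def algebra_simps)
  obtain i where i: "maxdiff x y = x $ i - y $ i" using maxdiff_obtain by blast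
  obtain j where j: "maxdiff x' y' = x' $ j - y' $ j" using maxdiff_obtain by blast
  have "x $ i - y $ i \<le> maxdiff x' y' + (a - b)" using h[of i] maxdiff_ge[of x' i y'] by linarith
  moreover have "maxdiff x' y' + (a - b) \<le> maxdiff x y" using h[of j] j maxdiff_ge[of x j y] by linarith
  ultimately show ?thesis using i by linarith
qed

lemma delta_raw_resp:
  assumes "proj_eq x x'" "proj_eq y y'"
  shows "delta_raw x y = delta_raw x' y'"
proof -
  obtain a b where "x - x' = const_vec a" "y - y' = const_vec b"
    using assms unfolding proj_eq_def by auto
  thus ?thesis unfolding delta_raw_def
    using maxdiff_shift[of x x' a y y' b] maxdiff_shift[of y y' b x x' a] by simp
qed

lift_definition delta :: "'d::finite projmax \<Rightarrow> 'd projmax \<Rightarrow> real" is delta_raw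
  using delta_raw_resp by blast

lemma maxdiff_triangle: "maxdiff x y \<le> maxdiff x z + maxdiff z y"
  unfolding maxdiff_le_iff
proof
  fix i
  have "x $ i - z $ i \<le> maxdiff x z" "z $ i - y $ i \<le> maxdiff z y" by (rule maxdiff_ge)+
  thus "x $ i - y $ i \<le> maxdiff x z + maxdiff z y" by linarith
qed

lemma delta_raw_zero: "delta_raw x y = 0 \<longleftrightarrow> proj_eq x y"
proof
  assume h: "delta_raw x y = 0"
  define c where "c = maxdiff x y"
  have "\<forall>i. x $ i - y $ i = c"
  proof
    fix i
    have "y $ i - x $ i \<le> maxdiff y x" by (rule maxdiff_ge)
    moreover have "x $ i - y $ i \<le> c" unfolding c_def by (rule maxdiff_ge)
    ultimately show "x $ i - y $ i = c" using h unfolding delta_raw_def c_def by linarith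
  qed
  thus "proj_eq x y" unfolding proj_eq_def const_vec_def by (auto simp: vec_eq_iff)
next
  assume "proj_eq x y"
  then obtain c where c: "x - y = const_vec c" unfolding proj_eq_def by auto
  have "x - x = const_vec 0" "y - x = const_vec (- c)"
    using c by (auto simp: vec_eq_iff const_vec_def algebra_simps)
  hence "delta_raw x y = delta_raw x x"
    using maxdiff_shift[of x x 0 y x "-c"] maxdiff_shift[of y x "-c" x x 0]
    unfolding delta_raw_def by simp
  also have "delta_raw x x = 0"
  proof -
    have "maxdiff x x = 0"
      using maxdiff_obtain[of x x] by auto
    thus ?thesis unfolding delta_raw_def by simp
  qed
  finally show "delta_raw x y = 0" .
qed

instantiation projmax :: (finite) metric_space
begin

definition dist_projmax :: "'a projmax \<Rightarrow> 'a projmax \<Rightarrow> real" where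
  "dist_projmax = delta"

definition uniformity_projmax :: "('a projmax \<times> 'a projmax) filter" where
  "uniformity_projmax = (INF e\<in>{0 <..}. principal {(x, y). dist x y < e})"

definition open_projmax :: "'a projmax set \<Rightarrow> bool" where
  "open_projmax U \<longleftrightarrow> (\<forall>x\<in>U. eventually (\<lambda>(x', y). x' = x \<longrightarrow> y \<in> U) uniformity)"

instance
proof
  fix x y :: "'a projmax"
  show "dist x y = 0 \<longleftrightarrow> x = y"
    unfolding dist_projmax_def
    by transfer (simp add: delta_raw_zero)
next
  fix x y z :: "'a projmax"
  show "dist x y \<le> dist x z + dist y z"
    unfolding dist_projmax_def
  proof transfer
    fix x y z :: "real ^ 'a"
    have "maxdiff x y \<le> maxdiff x z + maxdiff z y" "maxdiff y x \<le> maxdiff y z + maxdiff z x"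
      by (rule maxdiff_triangle)+
    thus "delta_raw x y \<le> delta_raw x z + delta_raw y z" unfolding delta_raw_def by linarith
  qed
qed (simp_all add: uniformity_projmax_def open_projmax_def)

end

text \<open>Action of an operator on PR^d_max (well defined for topical operators).\<close>
definition pact :: "(real ^ 'd \<Rightarrow> real ^ 'd) \<Rightarrow> 'd projmax \<Rightarrow> 'd projmax" where
  "pact f p = pclass (f (rep_projmax p))"

definition rank_one :: "(real ^ 'd \<Rightarrow> real ^ 'd) \<Rightarrow> bool" where
  "rank_one f \<longleftrightarrow> (\<forall>x y. pclass (f x) = pclass (f y))"

inductive_set comp_semigroup :: "('a \<Rightarrow> 'a) set \<Rightarrow> ('a \<Rightarrow> 'a) set"
  for S :: "('a \<Rightarrow> 'a) set" where
  gen: "f \<in> S \<Longrightarrow> f \<in> comp_semigroup S"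
| comp: "f \<in> comp_semigroup S \<Longrightarrow> g \<in> comp_semigroup S \<Longrightarrow> f \<circ> g \<in> comp_semigroup S"

definition measure_support :: "'a::topological_space measure \<Rightarrow> 'a set" where
  "measure_support \<nu> = {x. \<forall>U. open U \<longrightarrow> x \<in> U \<longrightarrow> emeasure \<nu> U > 0}"

text \<open>Measurable space of operators: product sigma-algebra (generated by evaluations),
  which on Top_d coincides with the Borel sigma-algebra of uniform convergence on compacts.\<close>
abbreviation op_space :: "(real ^ 'd \<Rightarrow> real ^ 'd) measure" where
  "op_space \<equiv> PiM UNIV (\<lambda>_. borel)"

fun op_prod :: "(nat \<Rightarrow> 'w \<Rightarrow> ('a \<Rightarrow> 'a)) \<Rightarrow> nat \<Rightarrow> 'w \<Rightarrow> 'a \<Rightarrow> 'a" where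
  "op_prod A 0 \<omega> = id"
| "op_prod A (Suc n) \<omega> = A (Suc n) \<omega> \<circ> op_prod A n \<omega>"

context prob_space
begin

text \<open>Support S_A of the law of A(1) in Top_d (topology of uniform convergence on compacts):
  theta in Top_d all of whose basic neighbourhoods have positive probability.\<close>
definition op_support :: "('a \<Rightarrow> real ^ 'd \<Rightarrow> real ^ 'd) \<Rightarrow> (real ^ 'd \<Rightarrow> real ^ 'd) set" where
  "op_support B = {\<theta>. topical \<theta> \<and>
      (\<forall>K e. compact K \<longrightarrow> K \<noteq> {} \<longrightarrow> e > 0 \<longrightarrow>
         prob {\<omega> \<in> space M. (SUP x\<in>K. dist (B \<omega> x) (\<theta> x)) < e} > 0)}"

end

end

(* The argument uses only that \<nu>0 is invariant for the chain and that the operators act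
   nonexpansively on PR^d_max.

   Rank-one points lie in the support: an element of S_A is approximated, uniformly on compact
   sets, by A(1) with positive probability, so invariance moves positive \<nu>0-mass from a
   bounded set V of positive measure into every neighbourhood of its image.  Nonexpansiveness
   propagates this along compositions, i.e. to all of T_A, and for a rank-one \<theta> the image
   of V is the single point of \<theta> 1.

   The support lies in the closure C of the rank-one points: almost surely every A(i) lies in
   S_A, so C is almost surely mapped into itself, while with probability q > 0 the product
   A(N)...A(1) is a rank-one element of T_A and maps everything into C.  Invariance of \<nu>0
   under N steps, which uses the independence of the A(i), gives
   \<nu>0(-C) \<le> (1 - q) \<nu>0(-C), hence \<nu>0(-C) = 0.

   The N-step invariance needs the action to be jointly measurable in the operator and the
   point for the product \<sigma>-algebra on operators; this is obtained by evaluating operators only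
   at dyadic points, which does not change topical (hence continuous) operators. *)

theory Submission
  imports Defs
begin

lemma pclass_rep_projmax [simp]: "pclass (rep_projmax p) = p"
  unfolding pclass_def using Quotient_abs_rep[OF Quotient_projmax] by blast

lemma pclass_eq_iff: "pclass x = pclass y \<longleftrightarrow> proj_eq x y"
  unfolding pclass_def by (rule projmax.abs_eq_iff)

lemma pclass_cases: obtains x where "p = pclass x"
  using pclass_rep_projmax by metis

lemma dist_pclass: "dist (pclass x) (pclass y) = delta_raw x y"
  unfolding dist_projmax_def pclass_def by (rule delta.abs_eq)

lemma const_vec_nth [simp]: "const_vec a $ i = a"
  by (simp add: const_vec_def)

lemma pclass_add_const [simp]: "pclass (x + const_vec a) = pclass x"
  unfolding pclass_eq_iff proj_eq_def by (auto intro!: exI[of _ a])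

lemma dist_vec_le_card_mult:
  fixes x y :: "real ^ 'd"
  assumes "\<And>i. \<bar>x $ i - y $ i\<bar> \<le> c"
  shows "dist x y \<le> real CARD('d) * c"
proof -
  have "dist x y \<le> (\<Sum>i\<in>UNIV. \<bar>(x - y) $ i\<bar>)"
    unfolding dist_norm by (rule norm_le_l1_cart)
  also have "\<dots> \<le> (\<Sum>i\<in>(UNIV::'d set). c)"
    using assms by (intro sum_mono) simp
  finally show ?thesis by simp
qed

lemma abs_component_le_dist: "\<bar>x $ i - y $ i\<bar> \<le> dist x y"
  by (metis component_le_norm_cart dist_norm vector_minus_component)

lemma topical_mono: "topical f \<Longrightarrow> (\<And>i. x $ i \<le> y $ i) \<Longrightarrow> f x $ i \<le> f y $ i"
  unfolding topical_def by blast

lemma topical_add_const: "topical f \<Longrightarrow> f (x + const_vec a) = f x + const_vec a"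
  unfolding topical_def by blast

lemma topical_comp: "topical f \<Longrightarrow> topical g \<Longrightarrow> topical (f \<circ> g)"
  unfolding topical_def by auto

lemma topical_id: "topical id"
  unfolding topical_def by auto

lemma topical_abs_diff_le:
  assumes f: "topical f" and xy: "\<And>j. \<bar>x $ j - y $ j\<bar> \<le> m"
  shows "\<bar>f x $ i - f y $ i\<bar> \<le> m"
proof -
  have "x $ j \<le> (y + const_vec m) $ j" "y $ j \<le> (x + const_vec m) $ j" for j
    using xy[of j] by (simp_all add: abs_le_iff)
  then have "f x $ i \<le> f (y + const_vec m) $ i" "f y $ i \<le> f (x + const_vec m) $ i"
    by (blast intro: topical_mono[OF f])+
  then show ?thesis
    by (simp add: topical_add_const[OF f] abs_le_iff)
qed

lemma dist_topical_le: "topical f \<Longrightarrow> dist (f x) (f y) \<le> real CARD('d) * dist x y"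
  for f :: "real ^ 'd \<Rightarrow> real ^ 'd"
  by (intro dist_vec_le_card_mult) (simp add: topical_abs_diff_le abs_component_le_dist)

lemma continuous_on_topical: "topical f \<Longrightarrow> continuous_on S (f :: real ^ 'd \<Rightarrow> _)"
  by (rule lipschitz_on_continuous_on[where L = "real CARD('d)"], rule lipschitz_onI)
     (simp_all add: dist_topical_le)

lemma maxdiff_topical_le: "topical f \<Longrightarrow> maxdiff (f x) (f y) \<le> maxdiff x y"
proof -
  assume f: "topical f"
  have "x $ j \<le> (y + const_vec (maxdiff x y)) $ j" for j
    using maxdiff_ge[of x j y] by (simp add: algebra_simps)
  then have "f x $ i \<le> f (y + const_vec (maxdiff x y)) $ i" for i
    by (blast intro: topical_mono[OF f])
  then show ?thesis
    by (simp add: maxdiff_le_iff topical_add_const[OF f] algebra_simps)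
qed

lemma delta_raw_topical_le: "topical f \<Longrightarrow> delta_raw (f x) (f y) \<le> delta_raw x y"
  unfolding delta_raw_def using maxdiff_topical_le by (metis add_mono)

lemma pact_pclass: "topical f \<Longrightarrow> pact f (pclass x) = pclass (f x)"
proof -
  assume f: "topical f"
  have "proj_eq (rep_projmax (pclass x)) x"
    by (simp flip: pclass_eq_iff)
  then obtain c where "rep_projmax (pclass x) = x + const_vec c"
    unfolding proj_eq_def by (metis add.commute diff_add_cancel)
  then show ?thesis
    unfolding pact_def by (simp add: topical_add_const[OF f])
qed

lemma dist_pact_le: "topical f \<Longrightarrow> dist (pact f p) (pact f q) \<le> dist p q"
  by (cases p rule: pclass_cases, cases q rule: pclass_cases)
     (simp add: pact_pclass dist_pclass delta_raw_topical_le)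

lemma continuous_on_pact: "topical f \<Longrightarrow> continuous_on S (pact f)"
  by (rule lipschitz_on_continuous_on[where L=1], rule lipschitz_onI) (simp_all add: dist_pact_le)

lemma pact_comp: "topical f \<Longrightarrow> topical g \<Longrightarrow> pact (f \<circ> g) p = pact f (pact g p)"
  by (cases p rule: pclass_cases) (simp add: pact_pclass topical_comp)

lemma pact_id [simp]: "pact id p = p"
  unfolding pact_def by simp

lemma pact_rank_one: "rank_one f \<Longrightarrow> pact f p = pclass (f (const_vec 1))"
  unfolding rank_one_def pact_def by blast

lemma rank_one_comp: "topical f \<Longrightarrow> rank_one g \<Longrightarrow> rank_one (f \<circ> g)"
  unfolding rank_one_def by (metis comp_apply pact_pclass)

lemma maxdiff_le_dist: "maxdiff x y \<le> dist x y"
  unfolding maxdiff_le_iff using abs_component_le_dist by (metis abs_le_iff)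

lemma dist_pclass_le: "dist (pclass x) (pclass y) \<le> 2 * dist x y"
  using maxdiff_le_dist[of x y] maxdiff_le_dist[of y x]
  by (simp add: dist_pclass delta_raw_def dist_commute)

lemma continuous_on_pclass: "continuous_on S pclass"
  by (rule lipschitz_on_continuous_on[where L = 2], rule lipschitz_onI)
     (simp_all add: dist_pclass_le)

text \<open>Since rep_projmax picks an arbitrary representative, it need not be continuous;
  subtracting its value at a fixed coordinate gives a Lipschitz section of pclass.\<close>
definition normal_rep :: "'d::finite projmax \<Rightarrow> real ^ 'd" where
  "normal_rep p = rep_projmax p - const_vec (rep_projmax p $ undefined)"

lemma pclass_normal_rep [simp]: "pclass (normal_rep p) = p"
proof -
  have "normal_rep p = rep_projmax p + const_vec (- (rep_projmax p $ undefined))"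
    unfolding normal_rep_def by (simp add: const_vec_def vec_eq_iff)
  then show ?thesis by simp
qed

lemma pact_normal_rep: "topical f \<Longrightarrow> pact f p = pclass (f (normal_rep p))"
  using pact_pclass[of f "normal_rep p"] by simp

lemma normal_rep_abs_diff_le: "\<bar>normal_rep p $ i - normal_rep q $ i\<bar> \<le> dist p q"
proof -
  define x y where "x = rep_projmax p" and "y = rep_projmax q"
  have d: "dist p q = delta_raw x y"
    unfolding x_def y_def by (metis dist_pclass pclass_rep_projmax)
  have "normal_rep p $ i - normal_rep q $ i = (x $ i - y $ i) - (x $ undefined - y $ undefined)"
    unfolding normal_rep_def x_def y_def by simp
  moreover have "x $ i - y $ i \<le> maxdiff x y" "y $ i - x $ i \<le> maxdiff y x"
    "x $ undefined - y $ undefined \<le> maxdiff x y" "y $ undefined - x $ undefined \<le> maxdiff y x"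
    by (rule maxdiff_ge)+
  ultimately show ?thesis
    unfolding d delta_raw_def abs_le_iff by linarith
qed

lemma dist_normal_rep_le: "dist (normal_rep p) (normal_rep q) \<le> real CARD('d) * dist p q"
  for p q :: "'d::finite projmax"
  by (intro dist_vec_le_card_mult) (simp add: normal_rep_abs_diff_le)

lemma continuous_on_normal_rep: "continuous_on S (normal_rep :: 'd::finite projmax \<Rightarrow> _)"
  by (rule lipschitz_on_continuous_on[where L = "real CARD('d)"], rule lipschitz_onI)
     (simp_all add: dist_normal_rep_le)

subsection \<open>Dyadic approximation and a measurable version of the action\<close>

definition dyadic_vec :: "nat \<Rightarrow> ('d::finite \<Rightarrow> int) \<Rightarrow> real ^ 'd" where
  "dyadic_vec k z = (\<chi> i. real_of_int (z i) / 2 ^ k)"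

definition dyadic_floor :: "nat \<Rightarrow> real ^ 'd::finite \<Rightarrow> real ^ 'd" where
  "dyadic_floor k y = dyadic_vec k (\<lambda>i. \<lfloor>2 ^ k * y $ i\<rfloor>)"

definition dyadic_vecs :: "(real ^ 'd::finite) set" where
  "dyadic_vecs = range (case_prod dyadic_vec)"

lemma countable_dyadic_vecs: "countable dyadic_vecs"
  unfolding dyadic_vecs_def by simp

lemma dyadic_vec_in_dyadic_vecs: "dyadic_vec k z \<in> dyadic_vecs"
  unfolding dyadic_vecs_def by auto

lemma dyadic_floor_in_dyadic_vecs: "dyadic_floor k y \<in> dyadic_vecs"
  unfolding dyadic_floor_def by (rule dyadic_vec_in_dyadic_vecs)

lemma dist_dyadic_floor_le: "dist (dyadic_floor k y) y \<le> real CARD('d) / 2 ^ k"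
  for y :: "real ^ 'd::finite"
proof -
  have "\<bar>dyadic_floor k y $ i - y $ i\<bar> \<le> 1 / 2 ^ k" for i
  proof -
    have "real_of_int \<lfloor>2 ^ k * y $ i\<rfloor> \<le> 2 ^ k * y $ i"
      "2 ^ k * y $ i < real_of_int \<lfloor>2 ^ k * y $ i\<rfloor> + 1"
      by linarith+
    then have "real_of_int \<lfloor>2 ^ k * y $ i\<rfloor> / 2 ^ k \<le> y $ i"
      "y $ i < (real_of_int \<lfloor>2 ^ k * y $ i\<rfloor> + 1) / 2 ^ k"
      by (simp_all add: divide_simps mult.commute)
    then show ?thesis
      unfolding dyadic_floor_def dyadic_vec_def by (simp add: abs_le_iff add_divide_distrib)
  qed
  then show ?thesis
    using dist_vec_le_card_mult[of "dyadic_floor k y" y "1 / 2 ^ k"] by simp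
qed

lemma dyadic_floor_tendsto: "(\<lambda>k. dyadic_floor k y) \<longlonglongrightarrow> y"
  for y :: "real ^ 'd::finite"
proof -
  have "(\<lambda>k. real CARD('d) / 2 ^ k) \<longlonglongrightarrow> 0"
    by (rule LIMSEQ_divide_realpow_zero) simp
  then have "(\<lambda>k. dist (dyadic_floor k y) y) \<longlonglongrightarrow> 0"
    by (rule Lim_null_comparison[rotated]) (simp add: dist_dyadic_floor_le)
  then show ?thesis
    by (subst tendsto_dist_iff)
qed

lemma dyadic_vecs_dense: "e > 0 \<Longrightarrow> \<exists>x\<in>dyadic_vecs. dist x y < e"
proof -
  assume "e > 0"
  then have "\<forall>\<^sub>F k in sequentially. dist (dyadic_floor k y) y < e"
    by (rule tendstoD[OF dyadic_floor_tendsto])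
  then obtain k where "dist (dyadic_floor k y) y < e"
    by (auto simp: eventually_sequentially)
  then show ?thesis
    using dyadic_floor_in_dyadic_vecs by blast
qed

lemma measurable_floor_vec:
  "(\<lambda>y::real ^ 'd::finite. \<lambda>i. \<lfloor>c * y $ i\<rfloor>) \<in> borel \<rightarrow>\<^sub>M count_space UNIV"
proof (subst measurable_count_space_eq2_countable, intro conjI ballI)
  fix z :: "'d \<Rightarrow> int"
  have "(\<lambda>y::real ^ 'd. \<lambda>i. \<lfloor>c * y $ i\<rfloor>) -` {z}
      = (\<Inter>i. {y. real_of_int (z i) \<le> c * y $ i \<and> c * y $ i < real_of_int (z i) + 1})"
    by (auto simp: fun_eq_iff floor_eq_iff)
  also have "\<dots> \<in> sets borel"
    by measurable
  finally show "(\<lambda>y::real ^ 'd. \<lambda>i. \<lfloor>c * y $ i\<rfloor>) -` {z} \<inter> space borel \<in> sets borel"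
    by simp
qed simp

text \<open>Evaluating a map only through its values at dyadic vectors makes the evaluation jointly
  measurable for the product \<sigma>-algebra; at points of continuity nothing changes.\<close>
definition lim_eval :: "(real ^ 'd::finite \<Rightarrow> 'b::{banach, second_countable_topology}) \<Rightarrow> real ^ 'd \<Rightarrow> 'b" where
  "lim_eval \<phi> y = lim (\<lambda>k. \<phi> (dyadic_floor k y))"

lemma lim_eval_eq: "isCont \<phi> y \<Longrightarrow> lim_eval \<phi> y = \<phi> y"
  unfolding lim_eval_def by (metis dyadic_floor_tendsto isCont_tendsto_compose limI)

lemma measurable_lim_eval:
  "(\<lambda>x. lim_eval (fst x) (snd x))
     \<in> borel_measurable ((PiM UNIV (\<lambda>_. borel) :: (real ^ 'd::finite \<Rightarrow> 'b::{banach, second_countable_topology}) measure) \<Otimes>\<^sub>M borel)"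
  (is "_ \<in> borel_measurable ?M")
  unfolding lim_eval_def
proof (rule borel_measurable_lim_metric)
  fix k
  have "(\<lambda>x. (\<lambda>z. fst x (dyadic_vec k z)) (\<lambda>i. \<lfloor>2 ^ k * snd x $ i\<rfloor>)) \<in> borel_measurable ?M"
  proof (rule measurable_compose_countable[where f = "\<lambda>z x. fst x (dyadic_vec k z)"])
    show "(\<lambda>x. fst x (dyadic_vec k z)) \<in> borel_measurable ?M" for z
      by (rule measurable_compose[OF measurable_fst measurable_component_singleton]) simp
    show "(\<lambda>x. \<lambda>i. \<lfloor>2 ^ k * snd x $ i\<rfloor>) \<in> ?M \<rightarrow>\<^sub>M count_space UNIV"
      by (rule measurable_compose[OF measurable_snd measurable_floor_vec])
  qed
  then show "(\<lambda>x. fst x (dyadic_floor k (snd x))) \<in> borel_measurable ?M"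
    by (simp add: dyadic_floor_def)
qed

definition pact_lim :: "(real ^ 'd::finite \<Rightarrow> real ^ 'd) \<Rightarrow> 'd projmax \<Rightarrow> 'd projmax" where
  "pact_lim \<phi> p = pclass (lim_eval \<phi> (normal_rep p))"

lemma pact_lim_topical: "topical \<phi> \<Longrightarrow> pact_lim \<phi> p = pact \<phi> p"
proof -
  assume "topical \<phi>"
  then have "isCont \<phi> y" for y
    using continuous_on_topical[of \<phi> UNIV] by (simp add: continuous_on_eq_continuous_at)
  with \<open>topical \<phi>\<close> show ?thesis
    unfolding pact_lim_def by (simp add: lim_eval_eq pact_normal_rep)
qed

lemma measurable_pact_lim:
  "(\<lambda>x. pact_lim (fst x) (snd x)) \<in> (op_space \<Otimes>\<^sub>M borel) \<rightarrow>\<^sub>M (borel :: 'd::finite projmax measure)"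
proof -
  have "(\<lambda>x. (fst x, normal_rep (snd x))) \<in> (op_space \<Otimes>\<^sub>M (borel :: 'd projmax measure)) \<rightarrow>\<^sub>M (op_space \<Otimes>\<^sub>M borel)"
    by (intro measurable_Pair measurable_fst measurable_compose[OF measurable_snd]
        borel_measurable_continuous_onI continuous_on_normal_rep)
  from measurable_compose[OF measurable_compose[OF this measurable_lim_eval]
      borel_measurable_continuous_onI[OF continuous_on_pclass]]
  show ?thesis
    unfolding pact_lim_def by simp
qed

lemma closed_measure_support: "closed (measure_support \<nu>)"
proof -
  have "- measure_support \<nu> = \<Union>{U. open U \<and> emeasure \<nu> U = 0}"
    unfolding measure_support_def by (auto simp: not_less)
  then show ?thesis
    by (auto simp: closed_def intro!: open_Union)
qed

lemma measure_support_subset: "closed C \<Longrightarrow> emeasure \<nu> (- C) = 0 \<Longrightarrow> measure_support \<nu> \<subseteq> C"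
  unfolding measure_support_def by (auto simp: open_Compl)

lemma ex_ball_emeasure_pos:
  fixes \<nu> :: "'a::metric_space measure"
  assumes "prob_space \<nu>" "sets \<nu> = sets borel"
  shows "\<exists>c r. emeasure \<nu> (ball c r) > 0"
proof (rule ccontr)
  assume "\<not> ?thesis"
  then have "emeasure \<nu> (\<Union>n. ball undefined (real n)) = 0"
    using assms(2) by (intro emeasure_UN_eq_0) (auto simp: not_less)
  moreover have "(\<Union>n. ball (undefined :: 'a) (real n)) = UNIV"
    by (auto simp: reals_Archimedean2)
  moreover have "space \<nu> = UNIV"
    using sets_eq_imp_space_eq[OF assms(2)] by simp
  ultimately show False
    using prob_space.emeasure_space_1[OF assms(1)] by simp
qed

lemma second_countable_euclidean: "second_countable (euclidean :: 'a::second_countable_topology topology)"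
proof -
  obtain B :: "'a set set" where "countable B" "topological_basis B"
    using ex_countable_basis by blast
  then show ?thesis
    unfolding second_countable_def
    by (metis open_openin openin_open topological_basisE topological_basis_open)
qed

lemma countable_dense_subset:
  fixes K :: "'a::second_countable_topology set"
  obtains C where "countable C" "C \<subseteq> K" "K \<subseteq> closure C"
proof -
  have "separable_space (top_of_set K)"
    by (intro second_countable_imp_separable_space second_countable_subtopology
        second_countable_euclidean)
  then obtain C where "countable C" "C \<subseteq> K" "top_of_set K closure_of C = K"
    unfolding separable_space_def by auto
  moreover from this have "K \<subseteq> closure C"
    by (simp add: closure_of_subtopology Int_absorb1 le_iff_inf)
  ultimately show ?thesis
    using that by blast
qed

lemma SUP_less_iff_dense:
  fixes g :: "'a::topological_space \<Rightarrow> real"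
  assumes g: "continuous_on UNIV g" and K: "compact K" "K \<noteq> {}" and C: "C \<subseteq> K" "K \<subseteq> closure C"
  shows "(SUP x\<in>K. g x) < e \<longleftrightarrow> (\<exists>m::nat. \<forall>x\<in>C. g x \<le> e - 1 / Suc m)"
proof
  have "bdd_above (g ` K)"
    by (intro bounded_imp_bdd_above compact_imp_bounded compact_continuous_image
        continuous_on_subset[OF g] K) simp
  moreover assume "(SUP x\<in>K. g x) < e"
  then obtain m :: nat where "1 / Suc m < e - (SUP x\<in>K. g x)"
    by (metis diff_gt_0_iff_gt nat_approx_posE)
  ultimately show "\<exists>m::nat. \<forall>x\<in>C. g x \<le> e - 1 / Suc m"
    using C(1) cSUP_upper[of _ K g] by (intro exI[of _ m]) force
next
  assume "\<exists>m::nat. \<forall>x\<in>C. g x \<le> e - 1 / Suc m"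
  then obtain m :: nat where m: "\<And>x. x \<in> C \<Longrightarrow> g x \<le> e - 1 / Suc m"
    by blast
  have "g x \<le> e - 1 / Suc m" if "x \<in> K" for x
    using continuous_le_on_closure[OF continuous_on_subset[OF g] _ m] C(2) that by blast
  then have "(SUP x\<in>K. g x) \<le> e - 1 / Suc m"
    using K(2) by (intro cSUP_least) auto
  moreover have "(0::real) < 1 / Suc m"
    by simp
  ultimately show "(SUP x\<in>K. g x) < e"
    by linarith
qed

subsection \<open>Almost every sample lies in the support\<close>

definition cylinder :: "((real ^ 'd) \<times> (real ^ 'd)) list \<Rightarrow> real \<Rightarrow> (real ^ 'd \<Rightarrow> real ^ 'd) set" where
  "cylinder L r = {f. \<forall>(x, v)\<in>set L. dist (f x) v < r}"

lemma cylinder_in_op_space: "cylinder L r \<in> sets (op_space :: (real ^ 'd::finite \<Rightarrow> _) measure)"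
proof -
  have "cylinder L r = {f \<in> space (op_space :: (real ^ 'd \<Rightarrow> _) measure). \<forall>xv\<in>set L. dist (f (fst xv)) (snd xv) < r}"
    unfolding cylinder_def by (auto simp: space_PiM)
  also have "\<dots> \<in> sets op_space"
    by measurable
  finally show ?thesis .
qed

lemma dist_topical_le_via:
  fixes f g :: "real ^ 'd \<Rightarrow> real ^ 'd"
  assumes "topical f" "topical g"
  shows "dist (f y) (g y) \<le> dist (f x) v + dist v (g x) + 2 * real CARD('d) * dist x y"
proof -
  have "dist (f y) (g y) \<le> dist (f y) (f x) + dist (f x) v + dist v (g x) + dist (g x) (g y)"
    by (smt (verit) dist_triangle)
  moreover have "dist (f y) (f x) \<le> real CARD('d) * dist x y" "dist (g x) (g y) \<le> real CARD('d) * dist x y"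
    using dist_topical_le[OF assms(1), of y x] dist_topical_le[OF assms(2), of x y]
    by (simp_all add: dist_commute)
  ultimately show ?thesis
    by linarith
qed

lemma topical_cylinder_approx:
  fixes \<theta> :: "real ^ 'd::finite \<Rightarrow> real ^ 'd"
  assumes \<theta>: "topical \<theta>" and K: "compact K" and e: "e > 0"
  obtains L m where "L \<in> lists (dyadic_vecs \<times> dyadic_vecs)" "\<theta> \<in> cylinder L (1 / Suc m)"
    "\<And>f y. topical f \<Longrightarrow> f \<in> cylinder L (1 / Suc m) \<Longrightarrow> y \<in> K \<Longrightarrow> dist (f y) (\<theta> y) \<le> e / 2"
proof -
  define c where "c = real CARD('d)"
  have c: "c > 0"
    unfolding c_def by simp
  define \<eta> where "\<eta> = e / (8 * c)"
  have "\<eta> > 0"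
    unfolding \<eta>_def using c e by simp
  then have "K \<subseteq> (\<Union>x\<in>dyadic_vecs. ball x \<eta>)"
    using dyadic_vecs_dense by (fastforce simp: dist_commute)
  then obtain F where F: "F \<subseteq> dyadic_vecs" "finite F" "K \<subseteq> (\<Union>x\<in>F. ball x \<eta>)"
    using compactE_image[OF K, of dyadic_vecs "\<lambda>x. ball x \<eta>"] by auto
  obtain m :: nat where m: "1 / Suc m < e / 8"
    using e by (metis nat_approx_posE zero_less_divide_iff zero_less_numeral)
  define r where "r = 1 / real (Suc m)"
  have "\<forall>x. \<exists>v\<in>dyadic_vecs. dist v (\<theta> x) < r"
    unfolding r_def by (simp add: dyadic_vecs_dense)
  then obtain v where v: "\<And>x. v x \<in> dyadic_vecs" "\<And>x. dist (v x) (\<theta> x) < r"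
    by metis
  obtain xs where xs: "set xs = F"
    using finite_list[OF F(2)] by blast
  define L where "L = map (\<lambda>x. (x, v x)) xs"
  have "dist (f y) (\<theta> y) \<le> e / 2" if f: "topical f" "f \<in> cylinder L r" and y: "y \<in> K" for f y
  proof -
    obtain x where x: "x \<in> F" "dist x y < \<eta>"
      using F(3) y by auto
    have "dist (f x) (v x) < r"
      using f(2) x(1) xs unfolding cylinder_def L_def by auto
    moreover have "2 * c * dist x y \<le> e / 4"
      using x(2) c unfolding \<eta>_def by (simp add: field_simps)
    ultimately show ?thesis
      using dist_topical_le_via[OF f(1) \<theta>, of y x "v x"] v(2)[of x] m
      unfolding r_def c_def by linarith
  qed
  moreover have "L \<in> lists (dyadic_vecs \<times> dyadic_vecs)"
    unfolding L_def using xs F(1) v(1) by auto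
  moreover have "\<theta> \<in> cylinder L r"
    unfolding cylinder_def L_def using v(2) by (auto simp: dist_commute)
  ultimately show ?thesis
    using that unfolding r_def by blast
qed

context prob_space
begin

lemma op_support_topical: "\<theta> \<in> op_support X \<Longrightarrow> topical \<theta>"
  unfolding op_support_def by blast

lemma sets_SUP_dist_less:
  assumes Y: "Y \<in> M \<rightarrow>\<^sub>M op_space" "\<And>\<omega>. \<omega> \<in> space M \<Longrightarrow> topical (Y \<omega>)"
    and \<theta>: "topical \<theta>" and K: "compact K" "K \<noteq> {}"
  shows "{\<omega> \<in> space M. (SUP x\<in>K. dist (Y \<omega> x) (\<theta> x)) < e} \<in> sets M"
proof -
  obtain C where C: "countable C" "C \<subseteq> K" "K \<subseteq> closure C"
    using countable_dense_subset by blast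
  have [measurable]: "(\<lambda>\<omega>. Y \<omega> x) \<in> borel_measurable M" for x
    using measurable_compose[OF Y(1) measurable_component_singleton[of x UNIV]] by simp
  have "(SUP x\<in>K. dist (Y \<omega> x) (\<theta> x)) < e
      \<longleftrightarrow> (\<exists>m::nat. \<forall>x\<in>C. dist (Y \<omega> x) (\<theta> x) \<le> e - 1 / Suc m)" if "\<omega> \<in> space M" for \<omega>
    by (intro SUP_less_iff_dense K C continuous_on_dist continuous_on_topical Y(2) \<theta> that)
  then have "{\<omega> \<in> space M. (SUP x\<in>K. dist (Y \<omega> x) (\<theta> x)) < e}
      = {\<omega> \<in> space M. \<exists>m::nat. \<forall>x\<in>C. dist (Y \<omega> x) (\<theta> x) \<le> e - 1 / Suc m}"
    by blast
  also have "\<dots> \<in> sets M"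
    using C(1) by measurable
  finally show ?thesis .
qed

lemma null_cylinder_outside_op_support:
  assumes Y: "Y \<in> M \<rightarrow>\<^sub>M op_space" "\<And>\<omega>. \<omega> \<in> space M \<Longrightarrow> topical (Y \<omega>)"
    and \<theta>: "topical \<theta>" "\<theta> \<notin> op_support Y"
  obtains L m where "L \<in> lists (dyadic_vecs \<times> dyadic_vecs)" "\<theta> \<in> cylinder L (1 / Suc m)"
    "prob (Y -` cylinder L (1 / Suc m) \<inter> space M) = 0"
proof -
  obtain K e where K: "compact K" "K \<noteq> {}" and e: "e > 0"
    and null: "\<not> prob {\<omega> \<in> space M. (SUP x\<in>K. dist (Y \<omega> x) (\<theta> x)) < e} > 0"
    using \<theta> unfolding op_support_def by blast
  obtain L m where L: "L \<in> lists (dyadic_vecs \<times> dyadic_vecs)" "\<theta> \<in> cylinder L (1 / Suc m)"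
    and approx: "\<And>f y. topical f \<Longrightarrow> f \<in> cylinder L (1 / Suc m) \<Longrightarrow> y \<in> K \<Longrightarrow> dist (f y) (\<theta> y) \<le> e / 2"
    using topical_cylinder_approx[OF \<theta>(1) K(1) e] by blast
  have "Y -` cylinder L (1 / Suc m) \<inter> space M \<subseteq> {\<omega> \<in> space M. (SUP x\<in>K. dist (Y \<omega> x) (\<theta> x)) < e}"
  proof safe
    fix \<omega> assume "\<omega> \<in> space M" "Y \<omega> \<in> cylinder L (1 / Suc m)"
    then have "(SUP x\<in>K. dist (Y \<omega> x) (\<theta> x)) \<le> e / 2"
      using K(2) approx Y(2) by (intro cSUP_least) auto
    then show "(SUP x\<in>K. dist (Y \<omega> x) (\<theta> x)) < e"
      using e by linarith
  qed
  then have "prob (Y -` cylinder L (1 / Suc m) \<inter> space M)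
      \<le> prob {\<omega> \<in> space M. (SUP x\<in>K. dist (Y \<omega> x) (\<theta> x)) < e}"
    by (rule finite_measure_mono[OF _ sets_SUP_dist_less[OF Y \<theta>(1) K]])
  then have "prob (Y -` cylinder L (1 / Suc m) \<inter> space M) = 0"
    using null measure_nonneg[of M "Y -` cylinder L (1 / Suc m) \<inter> space M"] by linarith
  with L show ?thesis
    using that by blast
qed

text \<open>Cylinders with dyadic data form a countable family, so the samples lying in a
  null cylinder form a null set.\<close>
lemma AE_in_op_support:
  assumes X: "X \<in> M \<rightarrow>\<^sub>M op_space" "\<And>\<omega>. \<omega> \<in> space M \<Longrightarrow> topical (X \<omega>)"
    and Y: "Y \<in> M \<rightarrow>\<^sub>M op_space" "\<And>\<omega>. \<omega> \<in> space M \<Longrightarrow> topical (Y \<omega>)"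
    and XY: "distr M op_space X = distr M op_space Y"
  shows "AE \<omega> in M. X \<omega> \<in> op_support Y"
proof -
  define null_cyls where "null_cyls = {(L, m). L \<in> lists (dyadic_vecs \<times> dyadic_vecs) \<and>
      prob (Y -` cylinder L (1 / Suc m) \<inter> space M) = 0}"
  define Z where "Z = (\<Union>(L, m)\<in>null_cyls. X -` cylinder L (1 / Suc m) \<inter> space M)"
  have "Z \<in> null_sets M"
    unfolding Z_def
  proof (intro null_sets_UN')
    show "countable null_cyls"
      unfolding null_cyls_def
      by (rule countable_subset[of _ "lists (dyadic_vecs \<times> dyadic_vecs) \<times> UNIV"])
         (auto simp: countable_dyadic_vecs)
    fix Lm assume "Lm \<in> null_cyls"
    then obtain L m where Lm: "Lm = (L, m)" "prob (Y -` cylinder L (1 / Suc m) \<inter> space M) = 0"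
      unfolding null_cyls_def by blast
    have "emeasure M (X -` cylinder L (1 / Suc m) \<inter> space M)
        = emeasure M (Y -` cylinder L (1 / Suc m) \<inter> space M)"
      using XY cylinder_in_op_space X(1) Y(1) by (metis emeasure_distr)
    then show "(case Lm of (L, m) \<Rightarrow> X -` cylinder L (1 / Suc m) \<inter> space M) \<in> null_sets M"
      using Lm measurable_sets[OF X(1) cylinder_in_op_space]
      by (auto simp: null_sets_def emeasure_eq_measure)
  qed
  moreover have "\<omega> \<in> Z" if \<omega>: "\<omega> \<in> space M" "X \<omega> \<notin> op_support Y" for \<omega>
  proof -
    obtain L m where "L \<in> lists (dyadic_vecs \<times> dyadic_vecs)" "X \<omega> \<in> cylinder L (1 / Suc m)"
      "prob (Y -` cylinder L (1 / Suc m) \<inter> space M) = 0"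
      using null_cylinder_outside_op_support[OF Y X(2)[OF \<omega>(1)] \<omega>(2)] .
    then show ?thesis
      unfolding Z_def null_cyls_def using \<omega>(1) by blast
  qed
  ultimately show ?thesis
    by (intro AE_I'[of Z]) auto
qed

lemma nn_integral_indep_var:
  assumes indep: "indep_var MX X MY Y" and G: "G \<in> borel_measurable (MX \<Otimes>\<^sub>M MY)"
  shows "(\<integral>\<^sup>+\<omega>. G (X \<omega>, Y \<omega>) \<partial>M) = (\<integral>\<^sup>+\<omega>. (\<integral>\<^sup>+\<omega>'. G (X \<omega>', Y \<omega>) \<partial>M) \<partial>M)"
proof -
  have X: "random_variable MX X" and Y: "random_variable MY Y"
    and joint: "distr M MX X \<Otimes>\<^sub>M distr M MY Y = distr M (MX \<Otimes>\<^sub>M MY) (\<lambda>\<omega>. (X \<omega>, Y \<omega>))"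
    using indep unfolding indep_var_distribution_eq by auto
  interpret PX: prob_space "distr M MX X"
    by (rule prob_space_distr[OF X])
  interpret PY: prob_space "distr M MY Y"
    by (rule prob_space_distr[OF Y])
  interpret PXY: pair_sigma_finite "distr M MX X" "distr M MY Y" ..
  have "(\<lambda>z. G (X (snd z), fst z)) \<in> borel_measurable (MY \<Otimes>\<^sub>M M)"
    using X G by measurable
  from borel_measurable_nn_integral_fst[OF this]
  have inner: "(\<lambda>y. \<integral>\<^sup>+\<omega>'. G (X \<omega>', y) \<partial>M) \<in> borel_measurable MY"
    by simp
  have "(\<integral>\<^sup>+\<omega>. G (X \<omega>, Y \<omega>) \<partial>M) = (\<integral>\<^sup>+z. G z \<partial>distr M (MX \<Otimes>\<^sub>M MY) (\<lambda>\<omega>. (X \<omega>, Y \<omega>)))"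
    using X Y G by (intro nn_integral_distr[symmetric]) auto
  also have "\<dots> = (\<integral>\<^sup>+y. \<integral>\<^sup>+x. G (x, y) \<partial>distr M MX X \<partial>distr M MY Y)"
    using G by (simp add: PXY.nn_integral_snd flip: joint)
  also have "\<dots> = (\<integral>\<^sup>+y. \<integral>\<^sup>+\<omega>'. G (X \<omega>', y) \<partial>M \<partial>distr M MY Y)"
    using X G by (intro nn_integral_cong nn_integral_distr) auto
  also have "\<dots> = (\<integral>\<^sup>+\<omega>. (\<integral>\<^sup>+\<omega>'. G (X \<omega>', Y \<omega>) \<partial>M) \<partial>M)"
    using Y inner by (intro nn_integral_distr) auto
  finally show ?thesis .
qed

end

lemma comp_semigroup_topical:
  assumes "\<And>f. f \<in> S \<Longrightarrow> topical f" "\<theta> \<in> comp_semigroup S"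
  shows "topical \<theta>"
  using assms(2) by induction (blast intro: assms(1) topical_comp)+

definition rank_one_points :: "(real ^ 'd \<Rightarrow> real ^ 'd) set \<Rightarrow> 'd::finite projmax set" where
  "rank_one_points S = {pclass (\<theta> (const_vec 1)) | \<theta>. \<theta> \<in> comp_semigroup S \<and> rank_one \<theta>}"

lemma pact_closure_rank_one_points:
  assumes f: "f \<in> S" "topical f" and p: "p \<in> closure (rank_one_points S)"
  shows "pact f p \<in> closure (rank_one_points S)"
proof -
  have "pact f ` rank_one_points S \<subseteq> rank_one_points S"
  proof (rule image_subsetI)
    fix q assume "q \<in> rank_one_points S"
    then obtain \<theta> where \<theta>: "\<theta> \<in> comp_semigroup S" "rank_one \<theta>" "q = pclass (\<theta> (const_vec 1))"
      unfolding rank_one_points_def by blast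
    then have "f \<circ> \<theta> \<in> comp_semigroup S" "rank_one (f \<circ> \<theta>)"
      using f by (auto intro: comp_semigroup.intros rank_one_comp)
    moreover have "pact f (pclass (\<theta> (const_vec 1))) = pclass ((f \<circ> \<theta>) (const_vec 1))"
      by (simp add: pact_pclass[OF f(2)])
    ultimately show "pact f q \<in> rank_one_points S"
      unfolding rank_one_points_def \<theta>(3) by blast
  qed
  then have "pact f ` closure (rank_one_points S) \<subseteq> closure (rank_one_points S)"
    by (intro image_closure_subset[OF continuous_on_pact[OF f(2)] closed_closure])
       (use closure_subset in blast)
  then show ?thesis
    using p by blast
qed

text \<open>pact (op_prod A n \<omega>) p as a measurable function of the first n operators, which is
  the form in which their independence can be used.\<close>
fun pact_lim_iter :: "(nat \<Rightarrow> real ^ 'd \<Rightarrow> real ^ 'd) \<Rightarrow> nat \<Rightarrow> 'd::finite projmax \<Rightarrow> 'd projmax" where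
  "pact_lim_iter fs 0 p = p"
| "pact_lim_iter fs (Suc n) p = pact_lim (fs (Suc n)) (pact_lim_iter fs n p)"

lemma pact_lim_iter_restrict: "m \<le> n \<Longrightarrow> pact_lim_iter (restrict fs {1..n}) m p = pact_lim_iter fs m p"
  by (induction m) auto

lemma measurable_pact_lim_iter:
  "m \<le> n \<Longrightarrow> (\<lambda>fs. pact_lim_iter fs m p) \<in> PiM {1..n} (\<lambda>_. op_space) \<rightarrow>\<^sub>M borel"
proof (induction m)
  case (Suc m)
  then have "(\<lambda>fs. (fs (Suc m), pact_lim_iter fs m p)) \<in> PiM {1..n} (\<lambda>_. op_space) \<rightarrow>\<^sub>M (op_space \<Otimes>\<^sub>M borel)"
    by (intro measurable_Pair measurable_component_singleton) auto
  from measurable_compose[OF this measurable_pact_lim] show ?case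
    by simp
qed simp

subsection \<open>Invariance of \<nu>0 under products of the operators\<close>

locale iid_topical = prob_space M for M :: "'w measure" +
  fixes A :: "nat \<Rightarrow> 'w \<Rightarrow> (real ^ 'd::finite \<Rightarrow> real ^ 'd)"
    and \<nu>0 :: "'d projmax measure"
  assumes measurable_A: "\<And>n. n \<ge> 1 \<Longrightarrow> A n \<in> M \<rightarrow>\<^sub>M op_space"
    and topical_A: "\<And>n \<omega>. n \<ge> 1 \<Longrightarrow> \<omega> \<in> space M \<Longrightarrow> topical (A n \<omega>)"
    and indep_A: "indep_vars (\<lambda>_. op_space) A {1..}"
    and distr_A: "\<And>n. n \<ge> 1 \<Longrightarrow> distr M op_space (A n) = distr M op_space (A 1)"
    and memory_loss: "\<exists>N\<ge>1. measure M {\<omega> \<in> space M. rank_one (op_prod A N \<omega>)} > 0"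
    and prob_space_\<nu>0: "prob_space \<nu>0"
    and sets_\<nu>0: "sets \<nu>0 = sets borel"
    and \<nu>0_invariant: "\<And>B. B \<in> sets borel \<Longrightarrow>
        emeasure \<nu>0 B = (\<integral>\<^sup>+ p. emeasure M {\<omega> \<in> space M. pact (A 1 \<omega>) p \<in> B} \<partial>\<nu>0)"
begin

lemma space_\<nu>0: "space \<nu>0 = UNIV"
  using sets_eq_imp_space_eq[OF sets_\<nu>0] by simp

lemma topical_A1: "\<omega> \<in> space M \<Longrightarrow> topical (A 1 \<omega>)"
  by (simp add: topical_A)

lemma topical_op_prod: "\<omega> \<in> space M \<Longrightarrow> topical (op_prod A n \<omega>)"
  by (induction n) (simp_all add: topical_id topical_comp topical_A)

lemma pact_op_prod_Suc:
  "\<omega> \<in> space M \<Longrightarrow> pact (op_prod A (Suc n) \<omega>) p = pact (A (Suc n) \<omega>) (pact (op_prod A n \<omega>) p)"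
  by (simp add: pact_comp topical_A topical_op_prod)

lemma pact_lim_iter_A: "\<omega> \<in> space M \<Longrightarrow> pact_lim_iter (\<lambda>i. A i \<omega>) n p = pact (op_prod A n \<omega>) p"
  by (induction n) (simp_all add: pact_lim_topical topical_A pact_comp topical_op_prod)

lemma measurable_restrict_A: "(\<lambda>\<omega>. restrict (\<lambda>i. A i \<omega>) {1..n}) \<in> M \<rightarrow>\<^sub>M PiM {1..n} (\<lambda>_. op_space)"
  by (intro measurable_restrict measurable_A) simp

lemma measurable_pact_op_prod: "(\<lambda>\<omega>. pact (op_prod A n \<omega>) p) \<in> M \<rightarrow>\<^sub>M borel"
proof (rule measurable_cong[THEN iffD1])
  show "(\<lambda>\<omega>. pact_lim_iter (restrict (\<lambda>i. A i \<omega>) {1..n}) n p) \<in> M \<rightarrow>\<^sub>M borel"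
    by (rule measurable_compose[OF measurable_restrict_A measurable_pact_lim_iter]) simp
qed (simp only: pact_lim_iter_restrict[OF order_refl] pact_lim_iter_A)

lemma measurable_pact_A1: "(\<lambda>x. pact (A 1 (snd x)) (fst x)) \<in> borel \<Otimes>\<^sub>M M \<rightarrow>\<^sub>M borel"
proof (rule measurable_cong[THEN iffD1])
  have "(\<lambda>x. (A 1 (snd x), fst x)) \<in> borel \<Otimes>\<^sub>M M \<rightarrow>\<^sub>M op_space \<Otimes>\<^sub>M borel"
    by (intro measurable_Pair measurable_compose[OF measurable_snd measurable_A] measurable_fst) simp
  from measurable_compose[OF this measurable_pact_lim]
  show "(\<lambda>x. pact_lim (A 1 (snd x)) (fst x)) \<in> borel \<Otimes>\<^sub>M M \<rightarrow>\<^sub>M borel"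
    by simp
qed (auto simp: pact_lim_topical topical_A space_pair_measure)

lemma nn_integral_A_eq_A1:
  assumes n: "n \<ge> 1" and g: "g \<in> borel_measurable op_space"
  shows "(\<integral>\<^sup>+\<omega>. g (A n \<omega>) \<partial>M) = (\<integral>\<^sup>+\<omega>. g (A 1 \<omega>) \<partial>M)"
proof -
  have "(\<integral>\<^sup>+\<omega>. g (A n \<omega>) \<partial>M) = (\<integral>\<^sup>+\<phi>. g \<phi> \<partial>distr M op_space (A n))"
    using measurable_A[OF n] g by (simp add: nn_integral_distr)
  also have "\<dots> = (\<integral>\<^sup>+\<phi>. g \<phi> \<partial>distr M op_space (A 1))"
    by (simp only: distr_A[OF n])
  also have "\<dots> = (\<integral>\<^sup>+\<omega>. g (A 1 \<omega>) \<partial>M)"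
    using measurable_A[of 1] g by (simp add: nn_integral_distr)
  finally show ?thesis .
qed

lemma nn_integral_\<nu>0_invariant:
  assumes h: "h \<in> borel_measurable borel"
  shows "(\<integral>\<^sup>+p. h p \<partial>\<nu>0) = (\<integral>\<^sup>+p. \<integral>\<^sup>+\<omega>. h (pact (A 1 \<omega>) p) \<partial>M \<partial>\<nu>0)"
proof -
  let ?F = "\<lambda>x. pact (A 1 (snd x)) (fst x)"
  have F: "?F \<in> \<nu>0 \<Otimes>\<^sub>M M \<rightarrow>\<^sub>M borel"
    using measurable_pact_A1 by (simp add: sets_pair_measure_cong[OF sets_\<nu>0 refl] cong: measurable_cong_sets)
  have distr_eq: "\<nu>0 = distr (\<nu>0 \<Otimes>\<^sub>M M) borel ?F"
  proof (rule measure_eqI)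
    fix B assume "B \<in> sets \<nu>0"
    then have B: "B \<in> sets borel"
      by (simp add: sets_\<nu>0)
    have "emeasure (distr (\<nu>0 \<Otimes>\<^sub>M M) borel ?F) B = emeasure (\<nu>0 \<Otimes>\<^sub>M M) (?F -` B \<inter> space (\<nu>0 \<Otimes>\<^sub>M M))"
      by (rule emeasure_distr[OF F B])
    also have "\<dots> = (\<integral>\<^sup>+p. emeasure M (Pair p -` (?F -` B \<inter> space (\<nu>0 \<Otimes>\<^sub>M M))) \<partial>\<nu>0)"
      by (rule emeasure_pair_measure_alt[OF measurable_sets[OF F B]])
    also have "\<dots> = (\<integral>\<^sup>+p. emeasure M {\<omega> \<in> space M. pact (A 1 \<omega>) p \<in> B} \<partial>\<nu>0)"
      by (intro nn_integral_cong arg_cong[where f = "emeasure M"]) (auto simp: space_pair_measure space_\<nu>0)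
    finally show "emeasure \<nu>0 B = emeasure (distr (\<nu>0 \<Otimes>\<^sub>M M) borel ?F) B"
      by (simp add: \<nu>0_invariant[OF B])
  qed (simp add: sets_\<nu>0)
  have "(\<integral>\<^sup>+p. h p \<partial>\<nu>0) = (\<integral>\<^sup>+p. h p \<partial>distr (\<nu>0 \<Otimes>\<^sub>M M) borel ?F)"
    by (rule arg_cong[where f = "\<lambda>N. \<integral>\<^sup>+p. h p \<partial>N", OF distr_eq])
  also have "\<dots> = (\<integral>\<^sup>+x. h (?F x) \<partial>(\<nu>0 \<Otimes>\<^sub>M M))"
    using F h by (simp add: nn_integral_distr)
  also have "\<dots> = (\<integral>\<^sup>+p. \<integral>\<^sup>+\<omega>. h (pact (A 1 \<omega>) p) \<partial>M \<partial>\<nu>0)"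
    using nn_integral_fst[OF measurable_compose[OF F h]] by simp
  finally show ?thesis .
qed

lemma measurable_nn_integral_pact_A1:
  "h \<in> borel_measurable borel \<Longrightarrow> (\<lambda>q. \<integral>\<^sup>+\<omega>. h (pact (A 1 \<omega>) q) \<partial>M) \<in> borel_measurable borel"
  using borel_measurable_nn_integral_fst[OF measurable_compose[OF measurable_pact_A1]] by simp

lemma nn_integral_pact_op_prod_Suc:
  assumes h: "h \<in> borel_measurable borel"
  shows "(\<integral>\<^sup>+\<omega>. h (pact (op_prod A (Suc n) \<omega>) p) \<partial>M)
    = (\<integral>\<^sup>+\<omega>. \<integral>\<^sup>+\<omega>'. h (pact (A 1 \<omega>') (pact (op_prod A n \<omega>) p)) \<partial>M \<partial>M)"
proof -
  define X where "X \<omega> = restrict (\<lambda>i. A i \<omega>) {Suc n}" for \<omega>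
  define Y where "Y \<omega> = restrict (\<lambda>i. A i \<omega>) {1..n}" for \<omega>
  define G where "G x = h (pact_lim (fst x (Suc n)) (pact_lim_iter (snd x) n p))" for x
  have indep: "indep_var (PiM {Suc n} (\<lambda>_. op_space)) X (PiM {1..n} (\<lambda>_. op_space)) Y"
    unfolding X_def Y_def by (rule indep_var_restrict[OF indep_A]) auto
  have "(\<lambda>x. (fst x (Suc n), pact_lim_iter (snd x) n p))
      \<in> PiM {Suc n} (\<lambda>_. op_space) \<Otimes>\<^sub>M PiM {1..n} (\<lambda>_. op_space) \<rightarrow>\<^sub>M op_space \<Otimes>\<^sub>M borel"
    using measurable_pact_lim_iter[OF order_refl] by measurable
  from measurable_compose[OF measurable_compose[OF this measurable_pact_lim] h]
  have G: "G \<in> borel_measurable (PiM {Suc n} (\<lambda>_. op_space) \<Otimes>\<^sub>M PiM {1..n} (\<lambda>_. op_space))"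
    unfolding G_def by simp
  have Y: "pact_lim_iter (Y \<omega>) n p = pact (op_prod A n \<omega>) p" if "\<omega> \<in> space M" for \<omega>
    unfolding Y_def using that by (simp only: pact_lim_iter_restrict[OF order_refl] pact_lim_iter_A)
  have "(\<integral>\<^sup>+\<omega>. h (pact (op_prod A (Suc n) \<omega>) p) \<partial>M) = (\<integral>\<^sup>+\<omega>. G (X \<omega>, Y \<omega>) \<partial>M)"
    by (intro nn_integral_cong) (simp add: G_def X_def Y pact_comp topical_op_prod pact_lim_topical topical_A)
  also have "\<dots> = (\<integral>\<^sup>+\<omega>. \<integral>\<^sup>+\<omega>'. h (pact_lim (A (Suc n) \<omega>') (pact_lim_iter (Y \<omega>) n p)) \<partial>M \<partial>M)"
    unfolding nn_integral_indep_var[OF indep G] by (simp add: G_def X_def)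
  also have "\<dots> = (\<integral>\<^sup>+\<omega>. \<integral>\<^sup>+\<omega>'. h (pact_lim (A 1 \<omega>') (pact_lim_iter (Y \<omega>) n p)) \<partial>M \<partial>M)"
  proof (rule nn_integral_cong)
    fix \<omega>
    have "(\<lambda>\<phi>. h (pact_lim \<phi> (pact_lim_iter (Y \<omega>) n p))) \<in> borel_measurable op_space"
      using measurable_compose[OF measurable_compose[OF measurable_Pair2' measurable_pact_lim] h]
      by simp
    then show "(\<integral>\<^sup>+\<omega>'. h (pact_lim (A (Suc n) \<omega>') (pact_lim_iter (Y \<omega>) n p)) \<partial>M)
        = (\<integral>\<^sup>+\<omega>'. h (pact_lim (A 1 \<omega>') (pact_lim_iter (Y \<omega>) n p)) \<partial>M)"
      by (rule nn_integral_A_eq_A1[rotated]) simp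
  qed
  also have "\<dots> = (\<integral>\<^sup>+\<omega>. \<integral>\<^sup>+\<omega>'. h (pact (A 1 \<omega>') (pact (op_prod A n \<omega>) p)) \<partial>M \<partial>M)"
    by (intro nn_integral_cong) (simp add: Y pact_lim_topical topical_A)
  finally show ?thesis .
qed

lemma nn_integral_\<nu>0_invariant_op_prod:
  "h \<in> borel_measurable borel \<Longrightarrow> (\<integral>\<^sup>+p. h p \<partial>\<nu>0) = (\<integral>\<^sup>+p. \<integral>\<^sup>+\<omega>. h (pact (op_prod A n \<omega>) p) \<partial>M \<partial>\<nu>0)"
proof (induction n arbitrary: h)
  case 0
  then show ?case
    by (simp add: emeasure_space_1 pact_def)
next
  case (Suc n)
  let ?Kh = "\<lambda>q. \<integral>\<^sup>+\<omega>. h (pact (A 1 \<omega>) q) \<partial>M"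
  have "(\<integral>\<^sup>+p. h p \<partial>\<nu>0) = (\<integral>\<^sup>+p. ?Kh p \<partial>\<nu>0)"
    by (rule nn_integral_\<nu>0_invariant[OF Suc.prems])
  also have "\<dots> = (\<integral>\<^sup>+p. \<integral>\<^sup>+\<omega>. ?Kh (pact (op_prod A n \<omega>) p) \<partial>M \<partial>\<nu>0)"
    by (rule Suc.IH[OF measurable_nn_integral_pact_A1[OF Suc.prems]])
  also have "\<dots> = (\<integral>\<^sup>+p. \<integral>\<^sup>+\<omega>. h (pact (op_prod A (Suc n) \<omega>) p) \<partial>M \<partial>\<nu>0)"
    by (simp only: nn_integral_pact_op_prod_Suc[OF Suc.prems])
  finally show ?case .
qed

end

lemma borel_open_UN_ball: "(\<Union>w\<in>V. ball (f w) e) \<in> sets borel"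
  by (intro borel_open open_UN) auto

lemma dist_le_SUP_topical:
  assumes "topical f" "topical g" "compact K" "x \<in> K"
  shows "dist (f x) (g x) \<le> (SUP y\<in>K. dist (f y) (g y))"
proof (rule cSUP_upper[OF assms(4)])
  have "continuous_on K (\<lambda>y. dist (f y) (g y))"
    by (intro continuous_on_dist continuous_on_topical assms)
  then show "bdd_above ((\<lambda>y. dist (f y) (g y)) ` K)"
    by (intro bounded_imp_bdd_above compact_imp_bounded compact_continuous_image assms(3))
qed

lemma dist_pact_less_of_SUP_dist:
  assumes f: "topical f" and g: "topical g" and K: "compact K" "normal_rep p \<in> K"
    and sup: "(SUP x\<in>K. dist (f x) (g x)) < e / 2"
  shows "dist (pact f p) (pact g p) < e"
proof -
  have "dist (f (normal_rep p)) (g (normal_rep p)) < e / 2"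
    using dist_le_SUP_topical[OF f g K] sup by (rule le_less_trans)
  then show ?thesis
    unfolding pact_normal_rep[OF f] pact_normal_rep[OF g]
    using dist_pclass_le[of "f (normal_rep p)" "g (normal_rep p)"] by linarith
qed

lemma normal_rep_ball_subset: "normal_rep ` ball c \<rho> \<subseteq> cball (normal_rep c) (real CARD('d) * \<rho>)"
  for c :: "'d::finite projmax"
proof safe
  fix p assume "p \<in> ball c \<rho>"
  then have "real CARD('d) * dist c p \<le> real CARD('d) * \<rho>"
    by (intro mult_left_mono) simp_all
  then show "normal_rep p \<in> cball (normal_rep c) (real CARD('d) * \<rho>)"
    unfolding mem_cball using dist_normal_rep_le[of c p] by linarith
qed

lemma UN_ball_nonexpansive_subset_ball:
  assumes "\<And>p q. dist (g p) (g q) \<le> dist p q" "V \<subseteq> ball c \<rho>"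
  shows "(\<Union>w\<in>V. ball (g w) e) \<subseteq> ball (g c) (\<rho> + e)"
proof
  fix q assume "q \<in> (\<Union>w\<in>V. ball (g w) e)"
  then obtain w where w: "w \<in> V" "dist (g w) q < e"
    by auto
  then have "dist (g c) (g w) < \<rho>"
    using assms by (meson le_less_trans mem_ball subsetD)
  then show "q \<in> ball (g c) (\<rho> + e)"
    using w(2) dist_triangle[of "g c" q "g w"] by simp
qed

lemma UN_ball_nonexpansive_comp_subset:
  assumes "\<And>p q. dist (f p) (f q) \<le> dist p q"
  shows "(\<Union>w\<in>(\<Union>v\<in>V. ball (g v) e). ball (f w) e) \<subseteq> (\<Union>v\<in>V. ball (f (g v)) (2 * e))"
proof
  fix q assume "q \<in> (\<Union>w\<in>(\<Union>v\<in>V. ball (g v) e). ball (f w) e)"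
  then obtain v w where "v \<in> V" "dist (g v) w < e" "dist (f w) q < e"
    by auto
  moreover have "dist (f (g v)) (f w) \<le> dist (g v) w"
    by (rule assms)
  ultimately show "q \<in> (\<Union>v\<in>V. ball (f (g v)) (2 * e))"
    using dist_triangle[of "f (g v)" q "f w"] by (intro UN_I[of v]) simp_all
qed

subsection \<open>Rank-one points lie in the support of \<nu>0\<close>

context iid_topical
begin

lemma sets_pact_A1_in: "W \<in> sets borel \<Longrightarrow> {\<omega> \<in> space M. pact (A 1 \<omega>) p \<in> W} \<in> sets M"
proof -
  have "(\<lambda>\<omega>. pact (A 1 \<omega>) p) \<in> M \<rightarrow>\<^sub>M borel"
    using measurable_compose[OF measurable_Pair1' measurable_pact_A1, of p] by simp
  then show "W \<in> sets borel \<Longrightarrow> ?thesis"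
    by (rule measurable_sets_Collect) simp
qed

lemma emeasure_\<nu>0_lower_bound:
  assumes V: "V \<in> sets borel" and W: "W \<in> sets borel"
    and \<Omega>: "\<And>p. p \<in> V \<Longrightarrow> \<Omega> \<subseteq> {\<omega> \<in> space M. pact (A 1 \<omega>) p \<in> W}"
  shows "emeasure M \<Omega> * emeasure \<nu>0 V \<le> emeasure \<nu>0 W"
proof -
  have "emeasure M \<Omega> * emeasure \<nu>0 V = (\<integral>\<^sup>+p. emeasure M \<Omega> * indicator V p \<partial>\<nu>0)"
    using V by (simp add: nn_integral_cmult_indicator sets_\<nu>0)
  also have "\<dots> \<le> (\<integral>\<^sup>+p. emeasure M {\<omega> \<in> space M. pact (A 1 \<omega>) p \<in> W} \<partial>\<nu>0)"
  proof (rule nn_integral_mono)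
    fix p
    show "emeasure M \<Omega> * indicator V p \<le> emeasure M {\<omega> \<in> space M. pact (A 1 \<omega>) p \<in> W}"
    proof (cases "p \<in> V")
      case True
      then show ?thesis
        using emeasure_mono[OF \<Omega>[OF True] sets_pact_A1_in[OF W]] by simp
    qed simp
  qed
  also have "\<dots> = emeasure \<nu>0 W"
    by (rule \<nu>0_invariant[OF W, symmetric])
  finally show ?thesis .
qed

lemma emeasure_thickening_pact_support:
  assumes \<theta>: "\<theta> \<in> op_support (A 1)"
    and V: "V \<in> sets borel" "V \<subseteq> ball c \<rho>" "emeasure \<nu>0 V > 0" and \<epsilon>: "\<epsilon> > 0"
  shows "emeasure \<nu>0 (\<Union>w\<in>V. ball (pact \<theta> w) \<epsilon>) > 0"
proof -
  define K where "K = cball (normal_rep c) (real CARD('d) * \<rho>)"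
  obtain v where "v \<in> V"
    using V(3) by (metis emeasure_empty less_irrefl ex_in_conv)
  then have "dist c v < \<rho>"
    using V(2) by auto
  then have "\<rho> > 0"
    using zero_le_dist[of c v] by linarith
  then have K: "compact K" "K \<noteq> {}"
    unfolding K_def by (auto simp: mult_less_0_iff)
  have rep_K: "normal_rep p \<in> K" if "p \<in> V" for p
    using that V(2) normal_rep_ball_subset[of c \<rho>] unfolding K_def by blast
  define \<Omega> where "\<Omega> = {\<omega> \<in> space M. (SUP x\<in>K. dist (A 1 \<omega> x) (\<theta> x)) < \<epsilon> / 2}"
  have "\<And>K e. compact K \<Longrightarrow> K \<noteq> {} \<Longrightarrow> e > 0 \<Longrightarrow>
      prob {\<omega> \<in> space M. (SUP x\<in>K. dist (A 1 \<omega> x) (\<theta> x)) < e} > 0"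
    using \<theta> unfolding op_support_def by blast
  then have "prob \<Omega> > 0"
    unfolding \<Omega>_def using K \<epsilon> half_gt_zero by blast
  then have "emeasure M \<Omega> * emeasure \<nu>0 V > 0"
    using V(3) by (simp add: ennreal_zero_less_mult_iff emeasure_eq_measure)
  also have "emeasure M \<Omega> * emeasure \<nu>0 V \<le> emeasure \<nu>0 (\<Union>w\<in>V. ball (pact \<theta> w) \<epsilon>)"
  proof (rule emeasure_\<nu>0_lower_bound[OF V(1) borel_open_UN_ball], safe)
    fix p \<omega> assume "p \<in> V" "\<omega> \<in> \<Omega>"
    then have "dist (pact (A 1 \<omega>) p) (pact \<theta> p) < \<epsilon>"
      using topical_A1 op_support_topical[OF \<theta>] K(1) rep_K
      by (intro dist_pact_less_of_SUP_dist) (auto simp: \<Omega>_def)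
    with \<open>p \<in> V\<close> show "pact (A 1 \<omega>) p \<in> (\<Union>w\<in>V. ball (pact \<theta> w) \<epsilon>)"
      by (intro UN_I[of p]) (simp_all add: dist_commute)
  qed (simp add: \<Omega>_def)
  finally show ?thesis .
qed

lemma topical_comp_semigroup: "\<theta> \<in> comp_semigroup (op_support (A 1)) \<Longrightarrow> topical \<theta>"
  by (rule comp_semigroup_topical[OF op_support_topical])

text \<open>Neighbourhoods of images of sets of positive measure have positive measure, first for
  elements of the support and then, since each pact is nonexpansive, for their compositions.\<close>
lemma emeasure_thickening_pact_semigroup:
  assumes "\<theta> \<in> comp_semigroup (op_support (A 1))"
    and "V \<in> sets borel" "V \<subseteq> ball c \<rho>" "emeasure \<nu>0 V > 0" "\<epsilon> > 0"
  shows "emeasure \<nu>0 (\<Union>w\<in>V. ball (pact \<theta> w) \<epsilon>) > 0"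
  using assms
proof (induction arbitrary: V c \<rho> \<epsilon>)
  case (gen \<theta>)
  then show ?case
    by (rule emeasure_thickening_pact_support)
next
  case (comp f g)
  have f: "topical f" and g: "topical g"
    using comp.hyps by (simp_all add: topical_comp_semigroup)
  define W where "W = (\<Union>w\<in>V. ball (pact g w) (\<epsilon> / 2))"
  have "W \<subseteq> ball (pact g c) (\<rho> + \<epsilon> / 2)"
    unfolding W_def using dist_pact_le[OF g] comp.prems(2) by (rule UN_ball_nonexpansive_subset_ball)
  moreover have "emeasure \<nu>0 W > 0"
    unfolding W_def using comp.prems by (intro comp.IH(2)) simp_all
  ultimately have "emeasure \<nu>0 (\<Union>w\<in>W. ball (pact f w) (\<epsilon> / 2)) > 0"
    using comp.prems(4) unfolding W_def by (intro comp.IH(1) borel_open_UN_ball) auto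
  also have "\<dots> \<le> emeasure \<nu>0 (\<Union>w\<in>V. ball (pact f (pact g w)) (2 * (\<epsilon> / 2)))"
    unfolding W_def using dist_pact_le[OF f]
    by (intro emeasure_mono UN_ball_nonexpansive_comp_subset) (simp_all add: sets_\<nu>0 borel_open_UN_ball)
  finally show ?case
    unfolding pact_comp[OF f g] by simp
qed

lemma rank_one_points_subset_measure_support:
  "rank_one_points (op_support (A 1)) \<subseteq> measure_support \<nu>0"
proof
  fix y assume "y \<in> rank_one_points (op_support (A 1))"
  then obtain \<theta> where \<theta>: "\<theta> \<in> comp_semigroup (op_support (A 1))" "rank_one \<theta>"
    and y: "y = pclass (\<theta> (const_vec 1))"
    unfolding rank_one_points_def by blast
  obtain c \<rho> where c\<rho>: "emeasure \<nu>0 (ball c \<rho>) > 0"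
    using ex_ball_emeasure_pos[OF prob_space_\<nu>0 sets_\<nu>0] by blast
  show "y \<in> measure_support \<nu>0"
    unfolding measure_support_def
  proof safe
    fix U assume "open U" "y \<in> U"
    then obtain \<epsilon> where \<epsilon>: "\<epsilon> > 0" "ball y \<epsilon> \<subseteq> U"
      by (meson open_contains_ball)
    have "c \<in> ball c \<rho>"
      using c\<rho> by (cases "\<rho> > 0") (auto simp: ball_empty not_less)
    then have "(\<Union>w\<in>ball c \<rho>. ball (pact \<theta> w) \<epsilon>) = ball y \<epsilon>"
      by (auto simp: pact_rank_one[OF \<theta>(2)] y)
    then have "emeasure \<nu>0 (ball y \<epsilon>) > 0"
      using emeasure_thickening_pact_semigroup[OF \<theta>(1) _ order_refl c\<rho> \<epsilon>(1)] by simp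
    also have "emeasure \<nu>0 (ball y \<epsilon>) \<le> emeasure \<nu>0 U"
      using \<epsilon>(2) \<open>open U\<close> by (intro emeasure_mono) (simp_all add: sets_\<nu>0)
    finally show "emeasure \<nu>0 U > 0" .
  qed
qed

end

lemma op_prod_in_comp_semigroup:
  "n \<ge> 1 \<Longrightarrow> (\<And>i. i \<in> {1..n} \<Longrightarrow> A i \<omega> \<in> S) \<Longrightarrow> op_prod A n \<omega> \<in> comp_semigroup S"
proof (induction n rule: nat_induct_at_least)
  case base
  then show ?case
    by (simp add: comp_semigroup.gen)
next
  case (Suc n)
  then have "A (Suc n) \<omega> \<in> S" "op_prod A n \<omega> \<in> comp_semigroup S"
    by simp_all
  then show ?case
    unfolding op_prod.simps by (rule comp_semigroup.comp[OF comp_semigroup.gen])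
qed

lemma ennreal_le_mult_self_imp_zero:
  fixes x :: ennreal
  assumes le: "x \<le> ennreal c * x" and c: "c < 1" and fin: "x \<noteq> \<infinity>"
  shows "x = 0"
proof -
  obtain r where r: "x = ennreal r" "r \<ge> 0"
    using fin by (cases x) auto
  show ?thesis
  proof (cases "c \<ge> 0")
    case True
    then have "r \<le> c * r"
      using le r by (simp add: ennreal_mult[symmetric] ennreal_le_iff)
    then have "(1 - c) * r \<le> 0"
      by (simp add: algebra_simps)
    then show ?thesis
      using c r by (simp add: mult_le_0_iff)
  next
    case False
    then show ?thesis
      using le by (simp add: ennreal_neg)
  qed
qed

subsection \<open>The complement of the closure of the rank-one points is null\<close>

context iid_topical
begin

abbreviation rank_one_closure :: "'d projmax set" where
  "rank_one_closure \<equiv> closure (rank_one_points (op_support (A 1)))"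

lemma AE_A_in_op_support: "AE \<omega> in M. \<forall>i\<in>{1..N}. A i \<omega> \<in> op_support (A 1)"
  by (intro AE_finite_allI AE_in_op_support measurable_A topical_A distr_A) auto

lemma pact_op_prod_rank_one_closure:
  assumes \<omega>: "\<omega> \<in> space M" "\<forall>i\<in>{1..n}. A i \<omega> \<in> op_support (A 1)" and p: "p \<in> rank_one_closure"
  shows "pact (op_prod A n \<omega>) p \<in> rank_one_closure"
  using \<omega>(2)
proof (induction n)
  case 0
  then show ?case
    using p by (simp add: pact_def)
next
  case (Suc n)
  then have A: "A (Suc n) \<omega> \<in> op_support (A 1)" and IH: "pact (op_prod A n \<omega>) p \<in> rank_one_closure"
    by simp_all
  have "topical (A (Suc n) \<omega>)"
    using topical_A \<omega>(1) by simp
  then show ?case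
    unfolding pact_op_prod_Suc[OF \<omega>(1)] by (rule pact_closure_rank_one_points[OF A _ IH])
qed

lemma emeasure_pact_op_prod_outside_le:
  assumes N: "N \<ge> 1" and E: "E = {\<omega> \<in> space M. rank_one (op_prod A N \<omega>)}" "E \<in> sets M"
  shows "emeasure M {\<omega> \<in> space M. pact (op_prod A N \<omega>) p \<notin> rank_one_closure}
    \<le> ennreal (1 - prob E) * indicator (- rank_one_closure) p"
proof (cases "p \<in> rank_one_closure")
  case True
  have "AE \<omega> in M. pact (op_prod A N \<omega>) p \<in> rank_one_closure"
    using AE_space AE_A_in_op_support[of N]
    by eventually_elim (rule pact_op_prod_rank_one_closure[OF _ _ True])
  then have "emeasure M {\<omega> \<in> space M. pact (op_prod A N \<omega>) p \<notin> rank_one_closure} \<le> emeasure M {}"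
    by (intro emeasure_mono_AE) auto
  then show ?thesis
    by simp
next
  case False
  have "AE \<omega> in M. \<omega> \<in> E \<longrightarrow> pact (op_prod A N \<omega>) p \<in> rank_one_closure"
    using AE_A_in_op_support[of N]
  proof eventually_elim
    case (elim \<omega>)
    then have "op_prod A N \<omega> \<in> comp_semigroup (op_support (A 1))"
      using N by (intro op_prod_in_comp_semigroup) auto
    then show ?case
      using closure_subset unfolding E rank_one_points_def by (force simp: pact_rank_one)
  qed
  then have "emeasure M {\<omega> \<in> space M. pact (op_prod A N \<omega>) p \<notin> rank_one_closure} \<le> emeasure M (space M - E)"
    using E(2) by (intro emeasure_mono_AE) auto
  also have "\<dots> = ennreal (1 - prob E)"
    using E(2) by (simp add: emeasure_eq_measure prob_compl)
  finally show ?thesis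
    using False by simp
qed

lemma emeasure_\<nu>0_outside_rank_one_closure: "emeasure \<nu>0 (- rank_one_closure) = 0"
proof -
  interpret \<nu>0: prob_space \<nu>0
    by (rule prob_space_\<nu>0)
  obtain N where N: "N \<ge> 1" and pos: "prob {\<omega> \<in> space M. rank_one (op_prod A N \<omega>)} > 0"
    using memory_loss by blast
  define E where "E = {\<omega> \<in> space M. rank_one (op_prod A N \<omega>)}"
  have E: "E \<in> sets M"
    using pos measure_notin_sets unfolding E_def by fastforce
  let ?V = "- rank_one_closure"
  have V: "?V \<in> sets borel"
    by (simp add: borel_open)
  have "emeasure \<nu>0 ?V = (\<integral>\<^sup>+p. indicator ?V p \<partial>\<nu>0)"
    using V by (simp add: sets_\<nu>0)
  also have "\<dots> = (\<integral>\<^sup>+p. \<integral>\<^sup>+\<omega>. indicator ?V (pact (op_prod A N \<omega>) p) \<partial>M \<partial>\<nu>0)"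
    using V by (intro nn_integral_\<nu>0_invariant_op_prod) simp
  also have "\<dots> = (\<integral>\<^sup>+p. emeasure M {\<omega> \<in> space M. pact (op_prod A N \<omega>) p \<notin> rank_one_closure} \<partial>\<nu>0)"
  proof (intro nn_integral_cong)
    fix p
    have "{\<omega> \<in> space M. pact (op_prod A N \<omega>) p \<notin> rank_one_closure}
        = (\<lambda>\<omega>. pact (op_prod A N \<omega>) p) -` ?V \<inter> space M"
      by auto
    also have "\<dots> \<in> sets M"
      by (rule measurable_sets[OF measurable_pact_op_prod V])
    finally show "(\<integral>\<^sup>+\<omega>. indicator ?V (pact (op_prod A N \<omega>) p) \<partial>M)
        = emeasure M {\<omega> \<in> space M. pact (op_prod A N \<omega>) p \<notin> rank_one_closure}"
      by (simp add: indicator_def nn_integral_indicator[symmetric] cong: nn_integral_cong_simp)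
  qed
  also have "\<dots> \<le> (\<integral>\<^sup>+p. ennreal (1 - prob E) * indicator ?V p \<partial>\<nu>0)"
    using N E E_def by (intro nn_integral_mono emeasure_pact_op_prod_outside_le) auto
  also have "\<dots> = ennreal (1 - prob E) * emeasure \<nu>0 ?V"
    using V by (simp add: nn_integral_cmult_indicator sets_\<nu>0)
  finally show ?thesis
    using pos unfolding E_def[symmetric]
    by (intro ennreal_le_mult_self_imp_zero[where c = "1 - prob E"]) simp_all
qed

theorem measure_support_\<nu>0: "measure_support \<nu>0 = rank_one_closure"
proof
  show "measure_support \<nu>0 \<subseteq> rank_one_closure"
    by (rule measure_support_subset[OF closed_closure emeasure_\<nu>0_outside_rank_one_closure])
  show "rank_one_closure \<subseteq> measure_support \<nu>0"
    by (rule closure_minimal[OF rank_one_points_subset_measure_support closed_measure_support])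
qed

end

theorem lemma3p1:
  fixes M :: "'w measure"
    and A :: "nat \<Rightarrow> 'w \<Rightarrow> (real ^ 'd \<Rightarrow> real ^ 'd)"
    and \<nu>0 :: "'d projmax measure"
  assumes "prob_space M"
    and rv: "\<And>n. n \<ge> 1 \<Longrightarrow> A n \<in> M \<rightarrow>\<^sub>M op_space"
    and topical: "\<And>n \<omega>. n \<ge> 1 \<Longrightarrow> \<omega> \<in> space M \<Longrightarrow> topical (A n \<omega>)"
    and indep: "prob_space.indep_vars M (\<lambda>_. op_space) A {1..}"
    and ident: "\<And>n. n \<ge> 1 \<Longrightarrow> distr M op_space (A n) = distr M op_space (A 1)"
    and memory_loss: "\<exists>N\<ge>1. measure M {\<omega> \<in> space M. rank_one (op_prod A N \<omega>)} > 0"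
    and nu_prob: "prob_space \<nu>0"
    and nu_sets: "sets \<nu>0 = sets borel"
    and nu_inv: "\<And>B. B \<in> sets borel \<Longrightarrow>
        emeasure \<nu>0 B = (\<integral>\<^sup>+ p. emeasure M {\<omega> \<in> space M. pact (A 1 \<omega>) p \<in> B} \<partial>\<nu>0)"
  shows "measure_support \<nu>0 =
    closure {pclass (\<theta> (const_vec 1)) | \<theta>.
       \<theta> \<in> comp_semigroup (prob_space.op_support M (A 1)) \<and> rank_one \<theta>}"
proof -
  interpret iid_topical M A \<nu>0
    using assms unfolding iid_topical_def iid_topical_axioms_def by blast
  show ?thesis
    using measure_support_\<nu>0 unfolding rank_one_points_def .
qed

end
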